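(* Let $K$ be a field of characteristic zero, $x=(x_1,\dots,x_n)$, and let $d\ge 2$. Let $f\in K[x]$ have nonzero terms of degrees $0,1,d$ only, say $f=f^{(0)}+f^{(1)}+f^{(d)}$ with $f^{(k)}$ homogeneous of degree $k$. Suppose that $f$ is reducible and that $\mathcal{J}f=(\partial f/\partial x_1,\dots,\partial f/\partial x_n)$ is unimodular. Then: (a) if $d\le 3$ or $f^{(0)}=0$, then $f$ has a divisor of degree $1$; (b) if $f$ has a divisor of degree $1$, then $f^{(0)}=0$, $f^{(1)}\mid f$ and $(f^{(1)})^2\mid f^{(d)}$.
   Context: A row vector of polynomials in $K[x]$ is unimodular if its entries generate the unit ideal of $K[x]$. *)

theory Defs
  imports "HOL-Library.Poly_Mapping"
begin

text \<open>Multivariate polynomials over 'a in the variables of the finite type 'v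
  (so n = CARD('v)): finitely supported maps from monomials (exponent vectors)
  to coefficients, with the convolution product of Poly_Mapping.\<close>
type_synonym ('v, 'a) mpoly = "('v \<Rightarrow>\<^sub>0 nat) \<Rightarrow>\<^sub>0 'a"

definition mon_deg :: "('v \<Rightarrow>\<^sub>0 nat) \<Rightarrow> nat" where
  "mon_deg m = (\<Sum>i\<in>Poly_Mapping.keys m. Poly_Mapping.lookup m i)"

text \<open>Total degree (0 for the zero polynomial).\<close>
definition total_deg :: "('v, 'a::zero) mpoly \<Rightarrow> nat" where
  "total_deg p = Max (insert 0 (mon_deg ` Poly_Mapping.keys p))"

definition hcomp :: "nat \<Rightarrow> ('v, 'a::zero) mpoly \<Rightarrow> ('v, 'a) mpoly" where
  "hcomp k p = Abs_poly_mapping (\<lambda>m. if mon_deg m = k then Poly_Mapping.lookup p m else 0)"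

definition pdiff :: "'v \<Rightarrow> ('v, 'a::comm_semiring_1) mpoly \<Rightarrow> ('v, 'a) mpoly" where
  "pdiff i p = Abs_poly_mapping
     (\<lambda>m. of_nat (Poly_Mapping.lookup m i + 1) * Poly_Mapping.lookup p (m + Poly_Mapping.single i 1))"

definition jacobian_unimodular :: "('v::finite, 'a::comm_ring_1) mpoly \<Rightarrow> bool" where
  "jacobian_unimodular f \<longleftrightarrow> (\<exists>g. (\<Sum>i\<in>UNIV. g i * pdiff i f) = 1)"

definition reducible :: "('v, 'a::comm_semiring_1) mpoly \<Rightarrow> bool" where
  "reducible p \<longleftrightarrow> (\<exists>g h. p = g * h \<and> total_deg g \<ge> 1 \<and> total_deg h \<ge> 1)"

end

theory Submission
  imports Defs
begin

text \<open>
  (a) If \<open>d \<le> 3\<close>, one of the two factors of \<open>f\<close> has degree \<open>1\<close>. If \<open>f\<^sub>0 = 0\<close>, one factor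
  \<open>h\<close> has no constant term, and comparing homogeneous components of \<open>f = g h\<close> degree by degree
  shows that the linear part \<open>f\<^sub>1\<close>, which is nonzero by unimodularity, divides \<open>h\<close>.

  (b) Let \<open>L = c + l\<close> divide \<open>f\<close>. Reading the unimodularity relation modulo \<open>L\<close>, i.e. after
  substituting for one variable so that \<open>L\<close> vanishes, shows \<open>f = L (\<kappa> + L r)\<close> with a
  constant \<open>\<kappa> \<noteq> 0\<close>. If \<open>c = 0\<close> the three claims can be read off directly. If \<open>c \<noteq> 0\<close>,
  Euler's identity shows that \<open>f\<^sub>1\<close> and \<open>f\<^sub>d\<close> are congruent to constants modulo \<open>L\<close>, and
  since \<open>L\<close> divides no nonzero homogeneous polynomial, \<open>f = a + s u + t u\<^sup>d\<close> with \<open>u = - l / c\<close>.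
  Then every partial derivative of \<open>f\<close> is a multiple of \<open>s + d t u\<^sup>d\<^sup>-\<^sup>1\<close>, which unimodularity
  forces to be constant; hence \<open>t = 0\<close>, contradicting \<open>deg f = d\<close>.
\<close>

abbreviation lookup :: "('a \<Rightarrow>\<^sub>0 'b::zero) \<Rightarrow> 'a \<Rightarrow> 'b" where
  "lookup \<equiv> Poly_Mapping.lookup"

abbreviation keys :: "('a \<Rightarrow>\<^sub>0 'b::zero) \<Rightarrow> 'a set" where
  "keys \<equiv> Poly_Mapping.keys"

abbreviation single :: "'a \<Rightarrow> 'b::zero \<Rightarrow> 'a \<Rightarrow>\<^sub>0 'b" where
  "single \<equiv> Poly_Mapping.single"

lemma poly_mapping_sum_single: "p = (\<Sum>m\<in>keys p. single m (lookup p m))"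
  by (rule poly_mapping_eqI) (simp add: lookup_sum lookup_single when_def in_keys_iff)

lemma mon_deg_eq_sum: "mon_deg (m::'v::finite \<Rightarrow>\<^sub>0 nat) = (\<Sum>i\<in>UNIV. lookup m i)"
  unfolding mon_deg_def by (rule sum.mono_neutral_left) (auto simp: in_keys_iff)

lemma mon_deg_add: "mon_deg ((m::'v::finite \<Rightarrow>\<^sub>0 nat) + n) = mon_deg m + mon_deg n"
  by (simp add: mon_deg_eq_sum lookup_add sum.distrib)

lemma mon_deg_zero [simp]: "mon_deg 0 = 0"
  by (simp add: mon_deg_def)

lemma mon_deg_single [simp]: "mon_deg (single (i::'v::finite) k) = k"
  by (simp add: mon_deg_eq_sum lookup_single when_def)

lemma mon_deg_eq_0_iff: "mon_deg (m::'v::finite \<Rightarrow>\<^sub>0 nat) = 0 \<longleftrightarrow> m = 0"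
  by (auto simp: mon_deg_eq_sum poly_mapping_eq_iff fun_eq_iff)

lemma mon_deg_eq_1_iff: "mon_deg (m::'v::finite \<Rightarrow>\<^sub>0 nat) = 1 \<longleftrightarrow> (\<exists>i. m = single i 1)"
proof
  assume deg: "mon_deg m = 1"
  then obtain i where i: "i \<in> keys m" by (fastforce simp: mon_deg_def)
  have "lookup m i + (\<Sum>j\<in>UNIV-{i}. lookup m j) = 1"
    using deg by (simp add: mon_deg_eq_sum sum.remove[of UNIV i])
  moreover have "lookup m i \<noteq> 0" using i by (simp add: in_keys_iff)
  ultimately have "lookup m i = 1" "(\<Sum>j\<in>UNIV-{i}. lookup m j) = 0" by linarith+
  then have "lookup m i = 1" "\<forall>j\<in>UNIV-{i}. lookup m j = 0" by simp_all
  then have "m = single i 1"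
    by (auto simp: poly_mapping_eq_iff fun_eq_iff lookup_single when_def)
  then show "\<exists>i. m = single i 1" ..
qed auto

section \<open>Ring homomorphisms\<close>

locale comm_ring_hom =
  fixes \<phi> :: "'a::comm_ring_1 \<Rightarrow> 'b::comm_ring_1"
  assumes hom_add: "\<phi> (x + y) = \<phi> x + \<phi> y"
    and hom_mult: "\<phi> (x * y) = \<phi> x * \<phi> y"
    and hom_one: "\<phi> 1 = 1"
begin

lemma hom_zero: "\<phi> 0 = 0"
  using hom_add[of 0 0] by simp

lemma hom_uminus: "\<phi> (- x) = - \<phi> x"
  using hom_add[of x "- x"] by (simp add: hom_zero add_eq_0_iff)

lemma hom_diff: "\<phi> (x - y) = \<phi> x - \<phi> y"
  using hom_add[of x "- y"] by (simp add: hom_uminus)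

lemma hom_sum: "\<phi> (sum f A) = (\<Sum>x\<in>A. \<phi> (f x))"
  by (induction A rule: infinite_finite_induct) (auto simp: hom_zero hom_add)

lemma hom_prod: "\<phi> (prod f A) = (\<Prod>x\<in>A. \<phi> (f x))"
  by (induction A rule: infinite_finite_induct) (auto simp: hom_one hom_mult)

lemma hom_power: "\<phi> (x ^ n) = \<phi> x ^ n"
  by (induction n) (auto simp: hom_one hom_mult)

end

definition Const :: "'a::zero \<Rightarrow> ('v, 'a) mpoly" where
  "Const a = single 0 a"

global_interpretation Const: comm_ring_hom "Const :: 'a::comm_ring_1 \<Rightarrow> ('v, 'a) mpoly"
  by unfold_locales (auto simp: Const_def single_add mult_single)

lemma Const_eq_0_iff [simp]: "Const a = 0 \<longleftrightarrow> a = 0"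
  by (metis Const_def lookup_single_eq single_zero)

lemma lookup_Const_mult: "lookup (Const c * p) m = c * lookup p m"
  unfolding Const_def mult_map_scale_conv_mult[symmetric]
  by (simp add: Poly_Mapping.map.rep_eq when_def)

lemma Const_mult_inverse: "c \<noteq> 0 \<Longrightarrow> Const (c::'a::field) * Const (inverse c) = 1"
  by (simp flip: Const.hom_mult add: Const.hom_one)

definition mpoly_eval :: "('a::zero \<Rightarrow> 'b::comm_ring_1) \<Rightarrow> (('v \<Rightarrow>\<^sub>0 nat) \<Rightarrow> 'b) \<Rightarrow> ('v, 'a) mpoly \<Rightarrow> 'b" where
  "mpoly_eval h \<chi> p = (\<Sum>m\<in>keys p. h (lookup p m) * \<chi> m)"

lemma mpoly_eval_zero [simp]: "mpoly_eval h \<chi> 0 = 0"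
  by (simp add: mpoly_eval_def)

locale mpoly_eval_hom = comm_ring_hom h for h :: "'a::comm_ring_1 \<Rightarrow> 'b::comm_ring_1" +
  fixes \<chi> :: "('v \<Rightarrow>\<^sub>0 nat) \<Rightarrow> 'b"
  assumes \<chi>_zero: "\<chi> 0 = 1" and \<chi>_add: "\<chi> (m + n) = \<chi> m * \<chi> n"
begin

lemma mpoly_eval_superset:
  "finite S \<Longrightarrow> keys p \<subseteq> S \<Longrightarrow> mpoly_eval h \<chi> p = (\<Sum>m\<in>S. h (lookup p m) * \<chi> m)"
  unfolding mpoly_eval_def by (rule sum.mono_neutral_left) (auto simp: in_keys_iff hom_zero)

lemma mpoly_eval_add: "mpoly_eval h \<chi> (p + q) = mpoly_eval h \<chi> p + mpoly_eval h \<chi> q"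
proof -
  let ?S = "keys p \<union> keys q"
  have "mpoly_eval h \<chi> (p + q) = (\<Sum>m\<in>?S. h (lookup (p + q) m) * \<chi> m)"
    using keys_add[of p q] by (intro mpoly_eval_superset) auto
  also have "\<dots> = (\<Sum>m\<in>?S. h (lookup p m) * \<chi> m) + (\<Sum>m\<in>?S. h (lookup q m) * \<chi> m)"
    by (simp add: lookup_add hom_add distrib_right sum.distrib)
  also have "\<dots> = mpoly_eval h \<chi> p + mpoly_eval h \<chi> q"
    by (subst (1 2) mpoly_eval_superset[symmetric]) auto
  finally show ?thesis .
qed

lemma mpoly_eval_sum: "mpoly_eval h \<chi> (sum f A) = (\<Sum>x\<in>A. mpoly_eval h \<chi> (f x))"
  by (induction A rule: infinite_finite_induct) (auto simp: mpoly_eval_add)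

lemma mpoly_eval_single: "mpoly_eval h \<chi> (single m a) = h a * \<chi> m"
  by (subst mpoly_eval_superset[of "{m}"]) auto

lemma mpoly_eval_mult: "mpoly_eval h \<chi> (p * q) = mpoly_eval h \<chi> p * mpoly_eval h \<chi> q"
proof -
  have "p * q = (\<Sum>m\<in>keys p. \<Sum>n\<in>keys q. single m (lookup p m) * single n (lookup q n))"
    by (subst (1) poly_mapping_sum_single, subst (2) poly_mapping_sum_single) (rule sum_product)
  then have "mpoly_eval h \<chi> (p * q)
      = (\<Sum>m\<in>keys p. \<Sum>n\<in>keys q. h (lookup p m) * \<chi> m * (h (lookup q n) * \<chi> n))"
    by (simp add: mpoly_eval_sum mult_single mpoly_eval_single hom_mult \<chi>_add ac_simps)
  also have "\<dots> = mpoly_eval h \<chi> p * mpoly_eval h \<chi> q"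
    by (simp add: mpoly_eval_def sum_product)
  finally show ?thesis .
qed

lemma comm_ring_hom_mpoly_eval: "comm_ring_hom (mpoly_eval h \<chi>)"
  by unfold_locales
    (auto simp: mpoly_eval_add mpoly_eval_mult mpoly_eval_single[of 0 1, simplified] hom_one \<chi>_zero)

end

section \<open>Absence of zero divisors\<close>

text \<open>Renaming the variables injectively into \<open>nat\<close> embeds the ring into one whose monomials
  are linearly ordered, for which the library already provides the \<open>idom\<close> instance.\<close>

definition rename_mon :: "('v::finite \<Rightarrow> nat) \<Rightarrow> ('v \<Rightarrow>\<^sub>0 nat) \<Rightarrow> (nat \<Rightarrow>\<^sub>0 nat)" where
  "rename_mon idx m = (\<Sum>v\<in>UNIV. single (idx v) (lookup m v))"

lemma lookup_rename_mon: "inj idx \<Longrightarrow> lookup (rename_mon idx m) (idx v) = lookup m v"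
  by (simp add: rename_mon_def lookup_sum lookup_single when_def inj_eq)

lemma rename_mon_inj: "inj idx \<Longrightarrow> inj (rename_mon idx)"
  by (metis injI lookup_rename_mon poly_mapping_eqI)

lemma mpoly_eval_hom_rename:
  "mpoly_eval_hom (\<lambda>a::'a::comm_ring_1. single 0 a) (\<lambda>m. single (rename_mon idx m) 1)"
  by unfold_locales
    (auto simp: single_add mult_single rename_mon_def lookup_add sum.distrib)

lemma mpoly_eval_rename_nonzero:
  fixes p :: "('v::finite, 'a::comm_ring_1) mpoly"
  assumes "inj idx" and "p \<noteq> 0"
  shows "mpoly_eval (\<lambda>a. single 0 a) (\<lambda>m. single (rename_mon idx m) 1) p \<noteq> 0"
proof -
  from \<open>p \<noteq> 0\<close> obtain m0 where m0: "m0 \<in> keys p" by fastforce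
  have "lookup (mpoly_eval (\<lambda>a. single 0 a) (\<lambda>m. single (rename_mon idx m) 1) p) (rename_mon idx m0)
      = (\<Sum>m\<in>keys p. lookup p m when m = m0)"
    using rename_mon_inj[OF \<open>inj idx\<close>]
    by (simp add: mpoly_eval_def lookup_sum mult_single lookup_single inj_eq)
  also have "\<dots> = lookup p m0" using m0 by (simp add: when_def)
  finally show ?thesis using m0 by (auto simp: in_keys_iff)
qed

lemma mpoly_mult_eq_0_iff:
  fixes p q :: "('v::finite, 'a::idom) mpoly"
  shows "p * q = 0 \<longleftrightarrow> p = 0 \<or> q = 0"
proof -
  obtain idx :: "'v \<Rightarrow> nat" where inj: "inj idx"
    using finite_imp_inj_to_nat_seg[of "UNIV :: 'v set"] by auto
  interpret mpoly_eval_hom "\<lambda>a::'a. single 0 a" "\<lambda>m. single (rename_mon idx m) 1"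
    by (rule mpoly_eval_hom_rename)
  have "p * q \<noteq> 0" if "p \<noteq> 0" "q \<noteq> 0"
  proof -
    have "mpoly_eval (\<lambda>a. single 0 a) (\<lambda>m. single (rename_mon idx m) 1) (p * q) \<noteq> 0"
      unfolding mpoly_eval_mult
      using mpoly_eval_rename_nonzero[OF inj] that by (simp only: mult_eq_0_iff) blast
    then show ?thesis by force
  qed
  then show ?thesis by auto
qed

lemma mpoly_power_ne_0:
  fixes p :: "('v::finite, 'a::idom) mpoly"
  shows "p \<noteq> 0 \<Longrightarrow> p ^ n \<noteq> 0"
  by (induction n) (auto simp: mpoly_mult_eq_0_iff)

section \<open>Homogeneous components and total degree\<close>

definition homogeneous :: "nat \<Rightarrow> ('v, 'a::zero) mpoly \<Rightarrow> bool" where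
  "homogeneous k p \<longleftrightarrow> (\<forall>m\<in>keys p. mon_deg m = k)"

lemma lookup_hcomp: "lookup (hcomp k p) m = (if mon_deg m = k then lookup p m else 0)"
proof -
  have "finite {m. (if mon_deg m = k then lookup p m else 0) \<noteq> 0}"
    by (rule finite_subset[of _ "keys p"]) (auto simp: in_keys_iff)
  then show ?thesis by (simp add: hcomp_def)
qed

lemma hcomp_eq_0_iff: "hcomp k p = 0 \<longleftrightarrow> (\<forall>m\<in>keys p. mon_deg m \<noteq> k)"
  by (auto simp: poly_mapping_eq_iff fun_eq_iff lookup_hcomp in_keys_iff)

lemma hcomp_add: "hcomp k (p + q) = hcomp k p + hcomp k q"
  by (rule poly_mapping_eqI) (simp add: lookup_hcomp lookup_add)

lemma hcomp_diff: "hcomp k (p - q) = hcomp k p - hcomp k (q :: ('v, 'a::ab_group_add) mpoly)"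
  by (rule poly_mapping_eqI) (simp add: lookup_hcomp lookup_minus)

lemma hcomp_zero [simp]: "hcomp k 0 = 0"
  by (simp add: hcomp_eq_0_iff)

lemma hcomp_sum: "hcomp k (sum f A) = (\<Sum>x\<in>A. hcomp k (f x))"
  by (induction A rule: infinite_finite_induct) (auto simp: hcomp_add)

lemma mpoly_eq_sum_hcomp:
  assumes "finite D" and "\<forall>m\<in>keys p. mon_deg m \<in> D"
  shows "p = (\<Sum>k\<in>D. hcomp k p)"
proof (rule poly_mapping_eqI)
  fix m
  have "lookup (\<Sum>k\<in>D. hcomp k p) m = (\<Sum>k\<in>D. lookup p m when k = mon_deg m)"
    by (simp add: lookup_sum lookup_hcomp when_def eq_commute)
  also have "\<dots> = lookup p m"
    using assms by (cases "m \<in> keys p") (auto simp: when_def in_keys_iff)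
  finally show "lookup p m = lookup (\<Sum>k\<in>D. hcomp k p) m" by simp
qed

lemma homogeneous_hcomp: "homogeneous k (hcomp k p)"
  by (auto simp: homogeneous_def in_keys_iff lookup_hcomp split: if_splits)

lemma hcomp_homogeneous: "homogeneous e p \<Longrightarrow> hcomp k p = (if k = e then p else 0)"
  by (rule poly_mapping_eqI) (auto simp: homogeneous_def lookup_hcomp in_keys_iff)

lemma homogeneous_iff_hcomp: "homogeneous k p \<longleftrightarrow> hcomp k p = p"
  by (metis hcomp_homogeneous homogeneous_hcomp)

lemma homogeneous_diff:
  "homogeneous k p \<Longrightarrow> homogeneous k q \<Longrightarrow> homogeneous k (p - q :: ('v, 'a::ab_group_add) mpoly)"
  by (simp add: homogeneous_iff_hcomp hcomp_diff)

lemma homogeneous_mult: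
  fixes p q :: "('v::finite, 'a::comm_semiring_1) mpoly"
  shows "homogeneous a p \<Longrightarrow> homogeneous b q \<Longrightarrow> homogeneous (a + b) (p * q)"
  using keys_mult[of p q] by (auto simp: homogeneous_def mon_deg_add)

lemma homogeneous_Const: "homogeneous 0 (Const a :: ('v::finite, 'a::zero) mpoly)"
  by (auto simp: homogeneous_def Const_def)

lemma homogeneous_Const_mult:
  fixes p :: "('v::finite, 'a::comm_ring_1) mpoly"
  shows "homogeneous k p \<Longrightarrow> homogeneous k (Const c * p)"
  using homogeneous_mult[OF homogeneous_Const] by fastforce

lemma homogeneous_power:
  fixes p :: "('v::finite, 'a::comm_ring_1) mpoly"
  shows "homogeneous a p \<Longrightarrow> homogeneous (n * a) (p ^ n)"
  using homogeneous_Const[of 1] by (induction n) (auto simp: Const.hom_one dest: homogeneous_mult)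

lemma homogeneous_0_iff: "homogeneous 0 (p :: ('v::finite, 'a::zero) mpoly) \<longleftrightarrow> p = Const (lookup p 0)"
proof
  assume "homogeneous 0 p"
  then have "keys p \<subseteq> {0}" by (auto simp: homogeneous_def mon_deg_eq_0_iff)
  then show "p = Const (lookup p 0)"
    by (intro poly_mapping_eqI) (auto simp: Const_def lookup_single when_def in_keys_iff)
qed (metis homogeneous_Const)

lemma hcomp_Const: "hcomp k (Const a :: ('v::finite, 'a::zero) mpoly) = (if k = 0 then Const a else 0)"
  by (simp add: hcomp_homogeneous[OF homogeneous_Const])

lemma hcomp_0_eq_Const: "hcomp 0 (p :: ('v::finite, 'a::zero) mpoly) = Const (lookup p 0)"
proof -
  have "hcomp 0 p = Const (lookup (hcomp 0 p) 0)"
    using homogeneous_hcomp[of 0 p] unfolding homogeneous_0_iff .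
  then show ?thesis by (simp add: lookup_hcomp)
qed

lemma total_deg_ge: "m \<in> keys p \<Longrightarrow> mon_deg m \<le> total_deg p"
  unfolding total_deg_def by (rule Max_ge) auto

lemma total_deg_le: "(\<And>m. m \<in> keys p \<Longrightarrow> mon_deg m \<le> N) \<Longrightarrow> total_deg p \<le> N"
  unfolding total_deg_def by (subst Max_le_iff) auto

lemma hcomp_eq_0_if_total_deg_less: "total_deg p < k \<Longrightarrow> hcomp k p = 0"
  using total_deg_ge by (fastforce simp: hcomp_eq_0_iff)

lemma total_deg_attained: "p \<noteq> 0 \<Longrightarrow> \<exists>m\<in>keys p. mon_deg m = total_deg p"
proof -
  assume "p \<noteq> 0"
  then obtain m where m: "m \<in> keys p" by fastforce
  have "total_deg p \<in> insert 0 (mon_deg ` keys p)"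
    unfolding total_deg_def by (rule Max_in) auto
  then show ?thesis using m total_deg_ge[OF m] by auto
qed

lemma hcomp_total_deg_ne_0: "p \<noteq> 0 \<Longrightarrow> hcomp (total_deg p) p \<noteq> 0"
  using total_deg_attained by (auto simp: hcomp_eq_0_iff)

lemma mpoly_eq_sum_hcomp_atMost: "total_deg p \<le> N \<Longrightarrow> p = (\<Sum>k\<le>N. hcomp k p)"
  using le_trans[OF total_deg_ge] by (intro mpoly_eq_sum_hcomp) auto

lemma total_deg_homogeneous: "homogeneous k p \<Longrightarrow> p \<noteq> 0 \<Longrightarrow> total_deg p = k"
  using hcomp_total_deg_ne_0[of p] hcomp_homogeneous[of k p "total_deg p"] by (auto split: if_splits)

lemma total_deg_Const: "total_deg (Const a :: ('v::finite, 'a::zero) mpoly) = 0"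
  by (auto simp: total_deg_def Const_def)

lemma total_deg_eq_0_iff: "total_deg (p :: ('v::finite, 'a::zero) mpoly) = 0 \<longleftrightarrow> p = Const (lookup p 0)"
proof
  assume "total_deg p = 0"
  then have "homogeneous 0 p" using total_deg_ge[of _ p] by (auto simp: homogeneous_def)
  then show "p = Const (lookup p 0)" by (simp only: homogeneous_0_iff)
qed (metis total_deg_Const)

lemma total_deg_mult_le:
  fixes p q :: "('v::finite, 'a::comm_semiring_1) mpoly"
  shows "total_deg (p * q) \<le> total_deg p + total_deg q"
proof (rule total_deg_le)
  fix m assume "m \<in> keys (p * q)"
  then obtain a b where "m = a + b" "a \<in> keys p" "b \<in> keys q" using keys_mult by blast
  then show "mon_deg m \<le> total_deg p + total_deg q"
    by (simp add: mon_deg_add add_mono total_deg_ge)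
qed

lemma hcomp_mult_homogeneous:
  fixes p q :: "('v::finite, 'a::comm_ring_1) mpoly"
  assumes "homogeneous e p"
  shows "hcomp k (p * q) = (if e \<le> k then p * hcomp (k - e) q else 0)"
proof -
  define N where "N = max (total_deg q) k"
  have "p * q = (\<Sum>j\<le>N. p * hcomp j q)"
    by (subst mpoly_eq_sum_hcomp_atMost[of q N]) (auto simp: N_def sum_distrib_left)
  then have "hcomp k (p * q) = (\<Sum>j\<le>N. hcomp k (p * hcomp j q))"
    by (simp add: hcomp_sum)
  also have "\<dots> = (\<Sum>j\<le>N. if j = k - e \<and> e \<le> k then p * hcomp (k - e) q else 0)"
    by (intro sum.cong refl, subst hcomp_homogeneous[OF homogeneous_mult[OF assms homogeneous_hcomp]])
      auto
  also have "\<dots> = (if e \<le> k then p * hcomp (k - e) q else 0)"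
    by (auto simp: N_def)
  finally show ?thesis .
qed

lemma hcomp_mult:
  fixes p q :: "('v::finite, 'a::comm_ring_1) mpoly"
  shows "hcomp k (p * q) = (\<Sum>i\<le>k. hcomp i p * hcomp (k - i) q)"
proof -
  define N where "N = max (total_deg p) k"
  have "p * q = (\<Sum>i\<le>N. hcomp i p * q)"
    by (subst mpoly_eq_sum_hcomp_atMost[of p N]) (auto simp: N_def sum_distrib_right)
  then have "hcomp k (p * q) = (\<Sum>i\<le>N. hcomp k (hcomp i p * q))"
    by (simp add: hcomp_sum)
  also have "\<dots> = (\<Sum>i\<le>N. if i \<le> k then hcomp i p * hcomp (k - i) q else 0)"
    by (intro sum.cong refl, subst hcomp_mult_homogeneous[OF homogeneous_hcomp]) auto
  also have "\<dots> = (\<Sum>i\<le>k. hcomp i p * hcomp (k - i) q)"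
    by (rule sum.mono_neutral_cong_right) (auto simp: N_def)
  finally show ?thesis .
qed

lemma hcomp_top_mult:
  fixes p q :: "('v::finite, 'a::comm_ring_1) mpoly"
  shows "hcomp (total_deg p + total_deg q) (p * q) = hcomp (total_deg p) p * hcomp (total_deg q) q"
proof -
  let ?a = "total_deg p" and ?b = "total_deg q"
  have "hcomp (?a + ?b) (p * q) = (\<Sum>i\<le>?a+?b. if i = ?a then hcomp ?a p * hcomp ?b q else 0)"
    unfolding hcomp_mult
  proof (intro sum.cong refl)
    fix i assume "i \<in> {..?a + ?b}"
    then consider "i < ?a" | "i = ?a" | "?a < i" by linarith
    then show "hcomp i p * hcomp (?a + ?b - i) q = (if i = ?a then hcomp ?a p * hcomp ?b q else 0)"
      by cases (auto simp: hcomp_eq_0_if_total_deg_less)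
  qed
  then show ?thesis by simp
qed

lemma total_deg_mult:
  fixes p q :: "('v::finite, 'a::idom) mpoly"
  assumes "p \<noteq> 0" "q \<noteq> 0"
  shows "total_deg (p * q) = total_deg p + total_deg q"
proof -
  have "hcomp (total_deg p + total_deg q) (p * q) \<noteq> 0"
    using assms by (simp add: hcomp_top_mult mpoly_mult_eq_0_iff hcomp_total_deg_ne_0)
  then show ?thesis
    using hcomp_eq_0_if_total_deg_less total_deg_mult_le[of p q] by (meson antisym not_le)
qed

lemma mpoly_unit_eq_Const:
  fixes p q :: "('v::finite, 'a::idom) mpoly"
  assumes "p * q = 1"
  obtains c where "c \<noteq> 0" "p = Const c"
proof -
  have "p \<noteq> 0" "q \<noteq> 0" using assms by auto
  then have "total_deg p = 0"
    using total_deg_mult assms total_deg_Const[of 1] by (metis Const.hom_one add_is_0)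
  then have p: "p = Const (lookup p 0)" by (simp add: total_deg_eq_0_iff)
  have "lookup p 0 \<noteq> 0"
  proof
    assume "lookup p 0 = 0"
    then have "p = 0" by (subst p) simp
    with \<open>p \<noteq> 0\<close> show False ..
  qed
  from this p show ?thesis by (rule that)
qed

section \<open>Derivations\<close>

lemma mult_derivation_from_monomials:
  fixes D :: "('v::finite, 'a::comm_ring_1) mpoly \<Rightarrow> ('v, 'a) mpoly"
  assumes add: "\<And>p q. D (p + q) = D p + D q"
    and single: "\<And>m n a b. D (single m a * single n b) = D (single m a) * single n b + single m a * D (single n b)"
  shows "D (p * q) = D p * q + p * D q"
proof -
  have D_sum: "D (sum f A) = (\<Sum>x\<in>A. D (f x))" for f :: "_ \<Rightarrow> ('v, 'a) mpoly" and A
    using add[of 0 0] by (induction A rule: infinite_finite_induct) (auto simp: add)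
  let ?s = "\<lambda>p m. single m (lookup p m)"
  have "p * q = (\<Sum>m\<in>keys p. \<Sum>n\<in>keys q. ?s p m * ?s q n)"
    by (subst (1) poly_mapping_sum_single, subst (2) poly_mapping_sum_single) (rule sum_product)
  then have "D (p * q) = (\<Sum>m\<in>keys p. \<Sum>n\<in>keys q. D (?s p m) * ?s q n + ?s p m * D (?s q n))"
    by (simp add: D_sum single)
  also have "\<dots> = (\<Sum>m\<in>keys p. D (?s p m)) * (\<Sum>n\<in>keys q. ?s q n)
      + (\<Sum>m\<in>keys p. ?s p m) * (\<Sum>n\<in>keys q. D (?s q n))"
    by (simp add: sum.distrib sum_product)
  also have "\<dots> = D p * q + p * D q"
    by (simp flip: D_sum poly_mapping_sum_single)
  finally show ?thesis .
qed

lemma lookup_pdiff: "lookup (pdiff i p) m = of_nat (lookup m i + 1) * lookup p (m + single i 1)"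
proof -
  have inj: "inj (\<lambda>m. m + single i (1::nat))" by (intro injI) (rule add_right_imp_eq)
  have "finite {m. of_nat (lookup m i + 1) * lookup p (m + single i 1) \<noteq> 0}"
    by (rule finite_subset[of _ "(\<lambda>m. m + single i 1) -` keys p"])
      (auto simp: in_keys_iff intro: finite_vimageI inj)
  then show ?thesis by (simp add: pdiff_def)
qed

lemma pdiff_add: "pdiff i (p + q) = pdiff i p + pdiff i q"
  by (rule poly_mapping_eqI) (simp add: lookup_pdiff lookup_add distrib_left)

lemma pdiff_single: "pdiff i (single k a) = single (k - single i 1) (of_nat (lookup k i) * a)"
proof (rule poly_mapping_eqI)
  fix m
  show "lookup (pdiff i (single k a)) m = lookup (single (k - single i 1) (of_nat (lookup k i) * a)) m"
  proof (cases "k = m + single i 1")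
    case True
    then have "k - single i 1 = m" by simp
    then show ?thesis using True by (simp add: lookup_pdiff lookup_add)
  next
    case False
    show ?thesis
    proof (cases "lookup k i = 0")
      case True
      then show ?thesis using False by (simp add: lookup_pdiff lookup_single)
    next
      case ne: False
      have "k = (k - single i 1) + single i 1"
        using ne by (auto simp: poly_mapping_eq_iff fun_eq_iff lookup_add lookup_minus lookup_single when_def)
      then have "k - single i 1 \<noteq> m" using False by metis
      then show ?thesis using False by (simp add: lookup_pdiff lookup_single when_def)
    qed
  qed
qed

lemma pdiff_mult: "pdiff i (p * q) = pdiff i p * q + p * pdiff i (q :: ('v::finite, 'a::comm_ring_1) mpoly)"
proof (rule mult_derivation_from_monomials[OF pdiff_add])
  fix m n :: "'v \<Rightarrow>\<^sub>0 nat" and a b :: 'a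
  let ?e = "single i (1::nat)"
  have shift: "k - ?e + l = k + l - ?e" if "lookup k i \<noteq> 0" for k l :: "'v \<Rightarrow>\<^sub>0 nat"
    using that by (auto simp: poly_mapping_eq_iff fun_eq_iff lookup_add lookup_minus lookup_single when_def)
  have "single (m - ?e + n) (of_nat (lookup m i) * a * b) = single (m + n - ?e) (of_nat (lookup m i) * a * b)"
    using shift[of m n] by (cases "lookup m i = 0") simp_all
  moreover have "single (m + (n - ?e)) (a * (of_nat (lookup n i) * b)) = single (m + n - ?e) (of_nat (lookup n i) * a * b)"
    using shift[of n m] by (cases "lookup n i = 0") (simp_all add: ac_simps)
  ultimately show "pdiff i (single m a * single n b) =
      pdiff i (single m a) * single n b + single m a * pdiff i (single n b)"
    by (simp add: mult_single pdiff_single lookup_add single_add[symmetric] algebra_simps)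
qed

lemma pdiff_Const [simp]: "pdiff i (Const a :: ('v::finite, 'a::comm_ring_1) mpoly) = 0"
  by (simp add: Const_def pdiff_single)

lemma pdiff_Const_mult: "pdiff i (Const a * p) = Const a * pdiff i (p :: ('v::finite, 'a::comm_ring_1) mpoly)"
  by (simp add: pdiff_mult)

lemma pdiff_power:
  "pdiff i (p ^ Suc n) = Const (of_nat (Suc n)) * p ^ n * pdiff i (p :: ('v::finite, 'a::comm_ring_1) mpoly)"
proof (induction n)
  case 0
  then show ?case by (simp add: Const.hom_one)
next
  case (Suc n)
  have "pdiff i (p ^ Suc (Suc n)) = pdiff i p * p ^ Suc n + p * pdiff i (p ^ Suc n)"
    by (simp add: pdiff_mult)
  also have "\<dots> = Const (of_nat (Suc (Suc n))) * p ^ Suc n * pdiff i p"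
    by (simp only: Suc Const.hom_add Const.hom_one of_nat_Suc) (simp add: algebra_simps)
  finally show ?case .
qed

text \<open>The Euler operator \<open>\<Sum>\<^sub>i x\<^sub>i \<partial>\<^sub>i\<close>.\<close>

definition euler :: "('v, 'a::comm_semiring_1) mpoly \<Rightarrow> ('v, 'a) mpoly" where
  "euler p = Abs_poly_mapping (\<lambda>m. of_nat (mon_deg m) * lookup p m)"

lemma lookup_euler: "lookup (euler p) m = of_nat (mon_deg m) * lookup p m"
proof -
  have "finite {m. of_nat (mon_deg m) * lookup p m \<noteq> 0}"
    by (rule finite_subset[of _ "keys p"]) (auto simp: in_keys_iff)
  then show ?thesis by (simp add: euler_def)
qed

lemma euler_add: "euler (p + q) = euler p + euler q"
  by (rule poly_mapping_eqI) (simp add: lookup_euler lookup_add distrib_left)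

lemma euler_mult: "euler (p * q) = euler p * q + p * euler (q :: ('v::finite, 'a::comm_ring_1) mpoly)"
proof (rule mult_derivation_from_monomials[OF euler_add])
  have euler_single: "euler (single k a) = single k (of_nat (mon_deg k) * a)" for k and a :: 'a
    by (rule poly_mapping_eqI) (simp add: lookup_euler lookup_single when_def)
  fix m n :: "'v \<Rightarrow>\<^sub>0 nat" and a b :: 'a
  show "euler (single m a * single n b) = euler (single m a) * single n b + single m a * euler (single n b)"
    by (simp add: mult_single euler_single mon_deg_add single_add[symmetric] algebra_simps)
qed

lemma euler_homogeneous: "homogeneous k p \<Longrightarrow> euler p = Const (of_nat k) * p"
  by (rule poly_mapping_eqI) (auto simp: lookup_euler lookup_Const_mult homogeneous_def in_keys_iff)

section \<open>Substitutions killing an affine form\<close>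

lemma dvd_prod_diff:
  "(\<And>v. v \<in> A \<Longrightarrow> (d::'a::comm_ring_1) dvd F v - G v) \<Longrightarrow> d dvd prod F A - prod G A"
proof (induction A rule: infinite_finite_induct)
  case (insert x A)
  have "prod F (insert x A) - prod G (insert x A) = F x * (prod F A - prod G A) + (F x - G x) * prod G A"
    using insert.hyps by (simp add: algebra_simps)
  then show ?case using insert by (simp add: dvd_add dvd_mult dvd_mult2)
qed auto

lemma dvd_power_diff: "(d::'a::comm_ring_1) dvd a - b \<Longrightarrow> d dvd a ^ n - b ^ n"
  using dvd_prod_diff[of "{..<n}" d "\<lambda>_. a" "\<lambda>_. b"] by simp

definition Var :: "'v \<Rightarrow> ('v, 'a::zero_neq_one) mpoly" where
  "Var v = single (single v 1) 1"

lemma single_eq_Const_mult_prod_Var: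
  "single m a = Const a * (\<Prod>v\<in>UNIV. Var v ^ lookup m v :: ('v::finite, 'a::comm_ring_1) mpoly)"
proof -
  have Var_power: "Var v ^ k = single (single v k) (1::'a)" for v and k
    by (induction k) (simp_all add: Var_def mult_single single_add[symmetric] add.commute)
  have prod_single: "(\<Prod>v\<in>A. single (f v) (1::'a)) = single (\<Sum>v\<in>A. f v) 1"
    for A and f :: "'v \<Rightarrow> 'v \<Rightarrow>\<^sub>0 nat"
    by (induction A rule: infinite_finite_induct) (simp_all add: mult_single)
  have "(\<Sum>v\<in>UNIV. single v (lookup m v)) = m"
    by (rule poly_mapping_eqI) (simp add: lookup_sum lookup_single when_def)
  then show ?thesis by (simp add: Var_power prod_single Const_def mult_single)
qed

lemma homogeneous_1_eq_sum_Var: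
  fixes l :: "('v::finite, 'a::comm_ring_1) mpoly"
  assumes "homogeneous 1 l"
  shows "l = (\<Sum>v\<in>UNIV. Const (lookup l (single v 1)) * Var v)"
proof (rule poly_mapping_eqI)
  fix m
  have "lookup (\<Sum>v\<in>UNIV. Const (lookup l (single v 1)) * Var v) m
      = (\<Sum>v\<in>UNIV. lookup l (single v 1) when m = single v 1)"
    by (simp add: lookup_sum Var_def Const_def mult_single lookup_single eq_commute)
  also have "\<dots> = lookup l m"
  proof (cases "mon_deg m = 1")
    case True
    then obtain w where w: "m = single w 1" unfolding mon_deg_eq_1_iff by blast
    have "single v (1::nat) = single w 1 \<longleftrightarrow> v = w" for v
      by (metis lookup_single_eq lookup_single_not_eq one_neq_zero)
    then have "(\<Sum>v\<in>UNIV. lookup l (single v 1) when m = single v 1) = (\<Sum>v\<in>UNIV. lookup l (single v 1) when v = w)"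
      by (intro sum.cong refl) (simp add: w when_def eq_commute)
    then show ?thesis by (simp add: w when_def)
  next
    case False
    then have "lookup l m = 0" using assms by (auto simp: homogeneous_def in_keys_iff)
    moreover have "m \<noteq> single v 1" for v using False by auto
    ultimately show ?thesis by (simp add: when_def)
  qed
  finally show "lookup l m = lookup (\<Sum>v\<in>UNIV. Const (lookup l (single v 1)) * Var v) m" by simp
qed

lemma total_deg_1_eq_affine:
  fixes L :: "('v::finite, 'a::comm_ring_1) mpoly"
  assumes "total_deg L = 1"
  shows "L = Const (lookup L 0) + (\<Sum>v\<in>UNIV. Const (lookup L (single v 1)) * Var v)"
proof -
  have "L = hcomp 0 L + hcomp 1 L"
    using mpoly_eq_sum_hcomp_atMost[of L 1] assms by simp
  also have "hcomp 1 L = (\<Sum>v\<in>UNIV. Const (lookup L (single v 1)) * Var v)"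
    by (subst homogeneous_1_eq_sum_Var[OF homogeneous_hcomp]) (simp add: lookup_hcomp)
  finally show ?thesis by (simp add: hcomp_0_eq_Const)
qed

lemma total_deg_1_linear_coeff_ne_0:
  fixes L :: "('v::finite, 'a::comm_ring_1) mpoly"
  assumes "total_deg L = 1"
  shows "\<exists>i. lookup L (single i 1) \<noteq> 0"
proof (rule ccontr)
  assume "\<not> ?thesis"
  then have "L = Const (lookup L 0)"
    by (subst total_deg_1_eq_affine[OF assms]) (simp add: Const.hom_zero)
  then have "total_deg L = 0" by (simp only: total_deg_eq_0_iff)
  with assms show False by simp
qed

lemma dvd_diff_comm_ring_hom:
  fixes \<sigma> :: "('v::finite, 'a::comm_ring_1) mpoly \<Rightarrow> ('v, 'a) mpoly"
  assumes "comm_ring_hom \<sigma>" and Const: "\<And>a. \<sigma> (Const a) = Const a"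
    and Var: "\<And>v. L dvd Var v - \<sigma> (Var v)"
  shows "L dvd p - \<sigma> p"
proof -
  interpret \<sigma>: comm_ring_hom \<sigma> by fact
  have single: "L dvd single m a - \<sigma> (single m a)" for m a
  proof -
    have "single m a - \<sigma> (single m a)
        = Const a * ((\<Prod>v\<in>UNIV. Var v ^ lookup m v) - (\<Prod>v\<in>UNIV. \<sigma> (Var v) ^ lookup m v))"
      by (simp add: single_eq_Const_mult_prod_Var[of m] \<sigma>.hom_mult \<sigma>.hom_prod \<sigma>.hom_power Const
          right_diff_distrib)
    then show ?thesis by (simp add: dvd_mult dvd_prod_diff dvd_power_diff Var)
  qed
  have "p - \<sigma> p = (\<Sum>m\<in>keys p. single m (lookup p m) - \<sigma> (single m (lookup p m)))"
    by (subst (1 2) poly_mapping_sum_single) (simp add: \<sigma>.hom_sum sum_subtractf)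
  then show ?thesis by (simp add: dvd_sum single)
qed

text \<open>The substitution \<open>x\<^sub>i \<mapsto> x\<^sub>i - L/\<lambda>\<^sub>i\<close>, for a variable \<open>x\<^sub>i\<close> occurring in \<open>L\<close> with
  coefficient \<open>\<lambda>\<^sub>i \<noteq> 0\<close>, is the identity modulo \<open>L\<close> and sends \<open>L\<close> to \<open>0\<close>.\<close>

lemma affine_substitution_exists:
  fixes L :: "('v::finite, 'a::field) mpoly"
  assumes "total_deg L = 1"
  obtains \<sigma> where "comm_ring_hom \<sigma>" "\<And>a. \<sigma> (Const a) = Const a" "\<sigma> L = 0" "\<And>p. L dvd p - \<sigma> p"
proof -
  define lam where "lam v = lookup L (single v 1)" for v
  have L: "L = Const (lookup L 0) + (\<Sum>v\<in>UNIV. Const (lam v) * Var v)"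
    unfolding lam_def using assms by (rule total_deg_1_eq_affine)
  obtain i where i: "lam i \<noteq> 0"
    unfolding lam_def using total_deg_1_linear_coeff_ne_0[OF assms] ..
  define y where "y v = (if v = i then Var i - Const (inverse (lam i)) * L else Var v)" for v
  define \<chi> where "\<chi> m = (\<Prod>v\<in>UNIV. y v ^ lookup m v)" for m
  interpret mpoly_eval_hom Const \<chi>
    by unfold_locales (simp_all add: \<chi>_def lookup_add power_add prod.distrib)
  define \<sigma> where "\<sigma> = mpoly_eval Const \<chi>"
  have \<sigma>: "comm_ring_hom \<sigma>" unfolding \<sigma>_def by (rule comm_ring_hom_mpoly_eval)
  interpret \<sigma>: comm_ring_hom \<sigma> by (fact \<sigma>)
  have \<sigma>_Const: "\<sigma> (Const a) = Const a" for a
    using mpoly_eval_single[of 0 a] by (simp add: \<sigma>_def \<chi>_zero Const_def)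
  have \<sigma>_Var: "\<sigma> (Var v) = y v" for v
  proof -
    have "\<chi> (single v 1) = (\<Prod>w\<in>UNIV. if w = v then y w else 1)"
      unfolding \<chi>_def by (intro prod.cong) (auto simp: lookup_single)
    then show ?thesis
      using mpoly_eval_single[of "single v 1" 1] by (simp add: \<sigma>_def Var_def Const.hom_one)
  qed
  have "\<sigma> L = Const (lookup L 0) + (\<Sum>v\<in>UNIV. Const (lam v) * Var v - (if v = i then L else 0))"
  proof -
    have "Const (lam i) * (Const (inverse (lam i)) * L) = L"
      by (simp add: mult.assoc[symmetric] Const_mult_inverse[OF i])
    then have "Const (lam v) * y v = Const (lam v) * Var v - (if v = i then L else 0)" for v
      by (simp add: y_def right_diff_distrib)
    then show ?thesis
      by (subst (1) L) (simp add: \<sigma>.hom_add \<sigma>.hom_sum \<sigma>.hom_mult \<sigma>_Const \<sigma>_Var)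
  qed
  also have "\<dots> = (Const (lookup L 0) + (\<Sum>v\<in>UNIV. Const (lam v) * Var v)) - L"
    by (simp add: sum_subtractf)
  also have "\<dots> = 0"
    by (simp flip: L)
  finally have "\<sigma> L = 0" .
  moreover have "L dvd p - \<sigma> p" for p
    using \<sigma> \<sigma>_Const by (rule dvd_diff_comm_ring_hom) (simp add: \<sigma>_Var y_def)
  ultimately show ?thesis using that \<sigma> \<sigma>_Const by blast
qed

section \<open>Affine divisors\<close>

text \<open>If \<open>R \<noteq> 0\<close>, the product \<open>(c + l) R\<close> has a nonzero component in the lowest degree of \<open>R\<close>
  and another one in the degree just above the top degree of \<open>R\<close>.\<close>

lemma homogeneous_multiple_of_affine_eq_0:
  fixes l P R :: "('v::finite, 'a::idom) mpoly"
  assumes l: "homogeneous 1 l" "l \<noteq> 0" and "c \<noteq> 0"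
    and P: "homogeneous k P" "P = (Const c + l) * R"
  shows "P = 0"
proof (rule ccontr)
  assume "P \<noteq> 0"
  then have "R \<noteq> 0" using P by auto
  have comp: "hcomp j P = Const c * hcomp j R + (if 1 \<le> j then l * hcomp (j - 1) R else 0)" for j
    by (simp add: P distrib_right hcomp_add hcomp_mult_homogeneous[OF homogeneous_Const]
        hcomp_mult_homogeneous[OF l(1)])
  define D where "D = total_deg R"
  have "hcomp (D + 1) P = l * hcomp D R"
    using comp[of "D + 1"] hcomp_eq_0_if_total_deg_less[of R "D + 1"] by (simp add: D_def)
  also have "\<dots> \<noteq> 0"
    using l(2) hcomp_total_deg_ne_0[OF \<open>R \<noteq> 0\<close>] by (simp add: D_def mpoly_mult_eq_0_iff)
  finally have top: "hcomp (D + 1) P \<noteq> 0" .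
  define j0 where "j0 = (LEAST j. hcomp j R \<noteq> 0)"
  have "hcomp j0 R \<noteq> 0"
    unfolding j0_def using hcomp_total_deg_ne_0[OF \<open>R \<noteq> 0\<close>] by (rule LeastI)
  moreover have "j0 \<le> D"
    unfolding j0_def D_def using hcomp_total_deg_ne_0[OF \<open>R \<noteq> 0\<close>] by (rule Least_le)
  moreover have "hcomp (j0 - 1) R = 0" if "1 \<le> j0"
  proof -
    have "j0 - 1 < j0" using that by simp
    then show ?thesis unfolding j0_def using not_less_Least by blast
  qed
  ultimately have "hcomp j0 P \<noteq> 0"
    using comp[of j0] \<open>c \<noteq> 0\<close> by (auto simp: mpoly_mult_eq_0_iff)
  with top \<open>j0 \<le> D\<close> show False
    using hcomp_homogeneous[OF P(1)] by (auto split: if_splits)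
qed

text \<open>The linear form \<open>u = - l / c\<close> is \<open>\<equiv> 1\<close> modulo \<open>c + l\<close>, so a homogeneous \<open>P\<close> of degree \<open>k\<close>
  that is congruent to the constant \<open>a\<close> agrees with \<open>a u\<^sup>k\<close> modulo \<open>c + l\<close>, hence everywhere.\<close>

lemma homogeneous_congruent_Const_mod_affine:
  fixes l P :: "('v::finite, 'a::field) mpoly"
  assumes l: "homogeneous 1 l" "l \<noteq> 0" and "c \<noteq> 0" and "homogeneous k P"
    and "(Const c + l) dvd P - Const a"
  shows "P = Const a * (Const (- inverse c) * l) ^ k"
proof -
  let ?L = "Const c + l" and ?u = "Const (- inverse c) * l"
  have inv: "- inverse c * c = - 1" using \<open>c \<noteq> 0\<close> by simp
  have "Const (- inverse c) * ?L = Const (- inverse c * c) + ?u"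
    by (simp only: distrib_left Const.hom_mult)
  also have "\<dots> = ?u - 1"
    by (simp only: inv Const.hom_uminus Const.hom_one) simp
  finally have "?u - 1 = Const (- inverse c) * ?L" ..
  then have "?L dvd ?u ^ k - 1"
    using dvd_power_diff[of ?L ?u 1 k] by simp
  then have "?L dvd (P - Const a) - Const a * (?u ^ k - 1)"
    using assms(5) by (simp add: dvd_diff dvd_mult)
  also have "(P - Const a) - Const a * (?u ^ k - 1) = P - Const a * ?u ^ k"
    by (simp add: algebra_simps)
  finally obtain R where "P - Const a * ?u ^ k = ?L * R"
    by (rule dvdE)
  moreover have "homogeneous k (P - Const a * ?u ^ k)"
    using homogeneous_power[OF homogeneous_Const_mult[OF l(1)], of k]
    by (intro homogeneous_diff assms(4) homogeneous_Const_mult) simp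
  ultimately have "P - Const a * ?u ^ k = 0"
    using homogeneous_multiple_of_affine_eq_0[OF l \<open>c \<noteq> 0\<close>] by blast
  then show ?thesis by simp
qed

section \<open>Consequences of unimodularity of the Jacobian row\<close>

lemma hcomp_1_ne_0_if_jacobian_unimodular:
  fixes f :: "('v::finite, 'a::comm_ring_1) mpoly"
  assumes "jacobian_unimodular f"
  shows "hcomp 1 f \<noteq> 0"
proof
  assume f1: "hcomp 1 f = 0"
  obtain g where g: "(\<Sum>i\<in>UNIV. g i * pdiff i f) = 1"
    using assms unfolding jacobian_unimodular_def by blast
  have "lookup (pdiff i f) 0 = 0" for i
    using arg_cong[OF f1, of "\<lambda>p. lookup p (single i 1)"] by (simp add: lookup_pdiff lookup_hcomp)
  then have "hcomp 0 (pdiff i f) = 0" for i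
    by (simp add: hcomp_0_eq_Const Const.hom_zero)
  then have "hcomp 0 (\<Sum>i\<in>UNIV. g i * pdiff i f) = 0"
    by (simp add: hcomp_sum hcomp_mult)
  moreover have "hcomp 0 (1 :: ('v, 'a) mpoly) = 1"
    using hcomp_Const[of 0 "1::'a"] by (simp add: Const.hom_one)
  ultimately show False using g by simp
qed

text \<open>Substituting a zero of \<open>L\<close> into the unimodularity relation \<open>\<Sum> g\<^sub>i \<partial>\<^sub>i(L q) = 1\<close>
  shows that the image of \<open>q\<close> is a unit, i.e. \<open>q\<close> is congruent to a nonzero constant modulo \<open>L\<close>.\<close>

lemma jacobian_unimodular_cofactor_of_linear:
  fixes L q :: "('v::finite, 'a::field) mpoly"
  assumes "total_deg L = 1" and "jacobian_unimodular (L * q)"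
  obtains \<kappa> r where "\<kappa> \<noteq> 0" "q = Const \<kappa> + L * r"
proof -
  obtain \<sigma> where \<sigma>: "comm_ring_hom \<sigma>" and \<sigma>_Const: "\<And>a. \<sigma> (Const a) = Const a"
    and \<sigma>_L: "\<sigma> L = 0" and \<sigma>_dvd: "\<And>p. L dvd p - \<sigma> p"
    using affine_substitution_exists[OF assms(1)] by blast
  interpret \<sigma>: comm_ring_hom \<sigma> by (fact \<sigma>)
  obtain g where g: "(\<Sum>i\<in>UNIV. g i * pdiff i (L * q)) = 1"
    using assms(2) unfolding jacobian_unimodular_def by blast
  have "1 = \<sigma> (\<Sum>i\<in>UNIV. g i * pdiff i (L * q))"
    by (simp add: g \<sigma>.hom_one)
  also have "\<dots> = \<sigma> q * (\<Sum>i\<in>UNIV. \<sigma> (g i) * \<sigma> (pdiff i L))"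
    by (simp add: \<sigma>.hom_sum \<sigma>.hom_mult \<sigma>.hom_add pdiff_mult \<sigma>_L sum_distrib_left ac_simps)
  finally have "\<sigma> q * (\<Sum>i\<in>UNIV. \<sigma> (g i) * \<sigma> (pdiff i L)) = 1" ..
  then obtain \<kappa> where "\<kappa> \<noteq> 0" and \<kappa>: "\<sigma> q = Const \<kappa>"
    by (rule mpoly_unit_eq_Const)
  obtain r where r: "q - \<sigma> q = L * r"
    using \<sigma>_dvd by blast
  have "q = \<sigma> q + (q - \<sigma> q)" by simp
  also have "\<dots> = Const \<kappa> + L * r" unfolding r by (simp only: \<kappa>)
  finally show ?thesis using \<open>\<kappa> \<noteq> 0\<close> by (rule that[rotated])
qed

text \<open>For \<open>f = a + s u + t u\<^sup>d\<close> every partial derivative is a multiple of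
  \<open>W = s + d t u\<^sup>d\<^sup>-\<^sup>1\<close>, which is then a unit; in characteristic zero this forces \<open>t = 0\<close>.\<close>

lemma jacobian_unimodular_poly_of_linear_form:
  fixes u :: "('v::finite, 'a::field_char_0) mpoly"
  assumes u: "homogeneous 1 u" "u \<noteq> 0" and "d \<ge> 2"
    and J: "jacobian_unimodular (Const a + Const s * u + Const t * u ^ d)"
  shows "t = 0"
proof -
  obtain g where g: "(\<Sum>i\<in>UNIV. g i * pdiff i (Const a + Const s * u + Const t * u ^ d)) = 1"
    using J unfolding jacobian_unimodular_def by blast
  obtain e where e: "d = Suc e" and "e \<ge> 1" using \<open>d \<ge> 2\<close> by (cases d) auto
  define W where "W = Const s + Const (t * of_nat d) * u ^ e"
  have "pdiff i (Const a + Const s * u + Const t * u ^ d) = W * pdiff i u" for i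
  proof -
    have "pdiff i (u ^ d) = Const (of_nat d) * u ^ e * pdiff i u"
      unfolding e by (rule pdiff_power)
    then have "pdiff i (Const a + Const s * u + Const t * u ^ d)
        = Const s * pdiff i u + Const t * (Const (of_nat d) * u ^ e * pdiff i u)"
      by (simp add: pdiff_add pdiff_Const_mult)
    also have "\<dots> = W * pdiff i u"
      by (simp add: W_def Const.hom_mult algebra_simps)
    finally show ?thesis .
  qed
  then have "W * (\<Sum>i\<in>UNIV. g i * pdiff i u) = 1"
    using g by (simp add: sum_distrib_left ac_simps)
  then obtain w where "w \<noteq> 0" "W = Const w" by (rule mpoly_unit_eq_Const)
  then have "hcomp e W = 0" using \<open>e \<ge> 1\<close> by (simp add: hcomp_Const)
  moreover have "hcomp e W = Const (t * of_nat d) * u ^ e"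
    using homogeneous_Const_mult[OF homogeneous_power[OF u(1), of e], where c = "t * of_nat d"] \<open>e \<ge> 1\<close>
    by (simp add: W_def hcomp_add hcomp_Const homogeneous_iff_hcomp)
  ultimately have "Const (t * of_nat d) * u ^ e = 0" by simp
  then show "t = 0"
    using mpoly_power_ne_0[OF u(2)] \<open>d \<ge> 2\<close> by (simp add: mpoly_mult_eq_0_iff)
qed

lemma euler_affine_multiple_congruent:
  fixes l r :: "('v::finite, 'a::comm_ring_1) mpoly"
  assumes l: "homogeneous 1 l"
  shows "(Const c + l) dvd euler ((Const c + l) * (Const \<kappa> + (Const c + l) * r)) + Const (c * \<kappa>)"
proof -
  let ?L = "Const c + l" and ?q = "Const \<kappa> + (Const c + l) * r"
  have "euler ?L = l"
    by (simp add: euler_add euler_homogeneous[OF homogeneous_Const] euler_homogeneous[OF l]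
        Const.hom_zero Const.hom_one)
  then have "euler (?L * ?q) + Const (c * \<kappa>) = l * ?q + ?L * euler ?q + Const c * Const \<kappa>"
    by (simp only: euler_mult Const.hom_mult)
  also have "\<dots> = ?L * (euler ?q + ?q - Const c * r)"
    by (simp add: algebra_simps)
  finally show ?thesis by simp
qed

text \<open>Write \<open>f = L q\<close> with \<open>L = c + l\<close> and \<open>q = \<kappa> + L r\<close>. Modulo \<open>L\<close> we have \<open>f \<equiv> 0\<close> and,
  by Euler's identity, \<open>f\<^sub>1 + d f\<^sub>d = E(L q) = l q + L E(q) \<equiv> -c \<kappa>\<close>; since \<open>d \<noteq> 1\<close>,
  this linear system shows that \<open>f\<^sub>1\<close> and \<open>f\<^sub>d\<close> are congruent to constants.\<close>

lemma hcomps_congruent_Const_mod_affine_divisor: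
  fixes l r :: "('v::finite, 'a::field_char_0) mpoly"
  assumes "d \<ge> 2" and f: "f = Const a + hcomp 1 f + hcomp d f"
    and l: "homogeneous 1 l" and fL: "f = (Const c + l) * (Const \<kappa> + (Const c + l) * r)"
  obtains s t where "(Const c + l) dvd hcomp 1 f - Const s" and "(Const c + l) dvd hcomp d f - Const t"
proof -
  let ?L = "Const c + l"
  let ?f1 = "hcomp 1 f" and ?fd = "hcomp d f" and ?d = "of_nat d :: 'a"
  have zero: "?L dvd Const a + ?f1 + ?fd"
    unfolding f[symmetric] by (subst fL) simp
  have "euler f = ?f1 + Const ?d * ?fd"
    by (subst f) (simp add: euler_add euler_homogeneous[OF homogeneous_Const]
        euler_homogeneous[OF homogeneous_hcomp] Const.hom_zero Const.hom_one)
  then have euler: "?L dvd ?f1 + Const ?d * ?fd + Const (c * \<kappa>)"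
    using euler_affine_multiple_congruent[OF l, of c \<kappa> r] unfolding fL[symmetric] by simp
  define s where "s = (c * \<kappa> - ?d * a) / (?d - 1)"
  have "?d \<noteq> 1" using \<open>d \<ge> 2\<close> by simp
  then have scalar: "(?d - 1) * s = c * \<kappa> - ?d * a" by (simp add: s_def)
  have "Const (?d - 1) * (?f1 - Const s) = Const (?d - 1) * ?f1 - Const ((?d - 1) * s)"
    by (simp add: right_diff_distrib Const.hom_mult)
  also have "\<dots> = Const (?d - 1) * ?f1 - Const (c * \<kappa> - ?d * a)"
    by (simp only: scalar)
  also have "\<dots> = Const ?d * (Const a + ?f1 + ?fd) - (?f1 + Const ?d * ?fd + Const (c * \<kappa>))"
    by (simp add: Const.hom_diff Const.hom_one Const.hom_mult algebra_simps)
  also have "?L dvd \<dots>" using zero euler by (simp add: dvd_diff)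
  finally have "?L dvd Const (inverse (?d - 1)) * (Const (?d - 1) * (?f1 - Const s))"
    by (rule dvd_mult)
  then have lin: "?L dvd ?f1 - Const s"
    using \<open>?d \<noteq> 1\<close> by (simp add: mult.assoc[symmetric] mult.commute[of "Const (inverse _)"] Const_mult_inverse)
  have "?L dvd (Const a + ?f1 + ?fd) - (?f1 - Const s)"
    using zero lin by (rule dvd_diff)
  also have "(Const a + ?f1 + ?fd) - (?f1 - Const s) = ?fd - Const (- a - s)"
    by (simp add: Const.hom_diff Const.hom_uminus algebra_simps)
  finally have "?L dvd ?fd - Const (- a - s)" .
  with lin show ?thesis by (rule that)
qed

text \<open>With \<open>u = - l / c\<close> one gets \<open>f = a + s u + t u\<^sup>d\<close>, and unimodularity forces \<open>t = 0\<close>.\<close>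

lemma hcomp_top_eq_0_if_affine_divisor:
  fixes f l r :: "('v::finite, 'a::field_char_0) mpoly"
  assumes "d \<ge> 2" and f: "f = Const a + hcomp 1 f + hcomp d f" and J: "jacobian_unimodular f"
    and l: "homogeneous 1 l" "l \<noteq> 0" and "c \<noteq> 0"
    and fL: "f = (Const c + l) * (Const \<kappa> + (Const c + l) * r)"
  shows "hcomp d f = 0"
proof -
  obtain s t where s: "(Const c + l) dvd hcomp 1 f - Const s" and t: "(Const c + l) dvd hcomp d f - Const t"
    using hcomps_congruent_Const_mod_affine_divisor[OF \<open>d \<ge> 2\<close> f l(1) fL] .
  define u where "u = Const (- inverse c) * l"
  have u: "homogeneous 1 u" "u \<noteq> 0"
    using homogeneous_Const_mult[OF l(1)] l(2) \<open>c \<noteq> 0\<close> by (simp_all add: u_def mpoly_mult_eq_0_iff)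
  have "hcomp 1 f = Const s * u" "hcomp d f = Const t * u ^ d"
    using homogeneous_congruent_Const_mod_affine[OF l \<open>c \<noteq> 0\<close> homogeneous_hcomp s]
      homogeneous_congruent_Const_mod_affine[OF l \<open>c \<noteq> 0\<close> homogeneous_hcomp t]
    by (simp_all add: u_def)
  then have "jacobian_unimodular (Const a + Const s * u + Const t * u ^ d)"
    using J f by simp
  then have "t = 0" by (rule jacobian_unimodular_poly_of_linear_form[OF u \<open>d \<ge> 2\<close>])
  with \<open>hcomp d f = Const t * u ^ d\<close> show ?thesis by (simp add: Const.hom_zero)
qed

section \<open>Linear divisors\<close>

lemma dvd_hcomp_if_dvd_hcomp_mult:
  fixes g h p :: "('v::finite, 'a::field) mpoly"
  assumes g0: "hcomp 0 g = Const c" "c \<noteq> 0" and "p dvd hcomp j (g * h)"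
    and below: "\<And>i. i < j \<Longrightarrow> p dvd hcomp i h"
  shows "p dvd hcomp j h"
proof -
  let ?rest = "\<Sum>i<j. hcomp (Suc i) g * hcomp (j - Suc i) h"
  have "Const c * hcomp j h = hcomp j (g * h) - ?rest"
    unfolding hcomp_mult g0(1)[symmetric] by (simp add: sum.atMost_shift)
  moreover have "p dvd ?rest"
    using below by (intro dvd_sum dvd_mult) auto
  ultimately have "p dvd Const (inverse c) * (Const c * hcomp j h)"
    using \<open>p dvd hcomp j (g * h)\<close> by (simp add: dvd_diff dvd_mult)
  then show ?thesis
    by (simp add: mult.assoc[symmetric] mult.commute[of "Const (inverse c)"] Const_mult_inverse[OF g0(2)])
qed

text \<open>Comparing homogeneous components degree by degree: the constant part of the cofactor
  \<open>g\<close> is a unit, so the linear part \<open>f\<^sub>1 = g\<^sub>0 h\<^sub>1\<close> divides every component of \<open>h\<close>.\<close>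

lemma hcomp_1_dvd_factor:
  fixes f g h :: "('v::finite, 'a::field) mpoly"
  assumes fgh: "f = g * h" and h0: "hcomp 0 h = 0" and f1: "hcomp 1 f \<noteq> 0"
    and "total_deg h < d" and gap: "\<And>k. k < d \<Longrightarrow> k \<noteq> 1 \<Longrightarrow> hcomp k f = 0"
  shows "hcomp 1 f dvd h"
proof -
  let ?l = "hcomp 1 f"
  define c where "c = lookup g 0"
  have "?l = hcomp 0 g * hcomp 1 h"
    using h0 by (simp add: fgh hcomp_mult)
  moreover have "hcomp 0 g = Const c"
    by (simp add: c_def hcomp_0_eq_Const)
  ultimately have c: "hcomp 0 g = Const c" "c \<noteq> 0"
    using f1 by (auto simp: Const.hom_zero)
  have "?l dvd hcomp j h" for j
  proof (induction j rule: less_induct)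
    case (less j)
    consider "d \<le> j" | "j = 0" | "j < d" by linarith
    then show ?case
    proof cases
      case 1
      then show ?thesis using hcomp_eq_0_if_total_deg_less[of h j] \<open>total_deg h < d\<close> by simp
    next
      case 2
      then show ?thesis using h0 by simp
    next
      case 3
      then have "?l dvd hcomp j (g * h)"
        using gap by (cases "j = 1") (auto simp: fgh)
      then show ?thesis using dvd_hcomp_if_dvd_hcomp_mult[OF c] less by blast
    qed
  qed
  then have "?l dvd (\<Sum>j\<le>total_deg h. hcomp j h)" by (simp add: dvd_sum)
  then show ?thesis by (simp flip: mpoly_eq_sum_hcomp_atMost)
qed

lemma hcomp_1_dvd_of_factorization:
  fixes f g h :: "('v::finite, 'a::field) mpoly"
  assumes fgh: "f = g * h" and "total_deg g \<ge> 1" "total_deg h \<ge> 1"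
    and f0: "hcomp 0 f = 0" and f1: "hcomp 1 f \<noteq> 0"
    and gap: "\<And>k. 1 < k \<Longrightarrow> k < total_deg f \<Longrightarrow> hcomp k f = 0"
  shows "hcomp 1 f dvd f"
proof -
  have "g \<noteq> 0" "h \<noteq> 0" using assms(2,3) by (auto simp: total_deg_def)
  then have deg: "total_deg f = total_deg g + total_deg h"
    by (simp add: fgh total_deg_mult)
  have gap': "hcomp k f = 0" if "k < total_deg f" "k \<noteq> 1" for k
    using that f0 gap by (cases "k = 0") auto
  have "hcomp 0 g * hcomp 0 h = 0"
    using f0 by (simp add: fgh hcomp_mult)
  then consider "hcomp 0 h = 0" | "hcomp 0 g = 0"
    by (auto simp: mpoly_mult_eq_0_iff)
  then show ?thesis
  proof cases
    case 1
    then have "hcomp 1 f dvd h"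
      using hcomp_1_dvd_factor[where d = "total_deg f", OF fgh _ f1 _ gap'] deg assms(2) by simp
    then show ?thesis by (simp add: fgh)
  next
    case 2
    then have "hcomp 1 f dvd g"
      using hcomp_1_dvd_factor[where d = "total_deg f", OF fgh[unfolded mult.commute[of g]] _ f1 _ gap'] deg assms(3) by simp
    then show ?thesis by (simp add: fgh)
  qed
qed

lemma hcomps_of_linear_multiple:
  fixes l r :: "('v::finite, 'a::field) mpoly"
  assumes l: "homogeneous 1 l" and "\<kappa> \<noteq> 0" and "d \<ge> 2" and f: "f = l * (Const \<kappa> + l * r)"
  shows "hcomp 0 f = 0" and "hcomp 1 f dvd f" and "(hcomp 1 f)\<^sup>2 dvd hcomp d f"
proof -
  have inv: "Const \<kappa> * Const (inverse \<kappa>) = 1" by (rule Const_mult_inverse[OF \<open>\<kappa> \<noteq> 0\<close>])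
  show "hcomp 0 f = 0"
    by (simp add: f hcomp_mult_homogeneous[OF l])
  have f1: "hcomp 1 f = l * Const \<kappa>"
    by (simp add: f hcomp_mult_homogeneous[OF l] hcomp_add hcomp_Const)
  have "(l * Const \<kappa>) * (Const (inverse \<kappa>) * (Const \<kappa> + l * r))
      = l * (Const \<kappa> * Const (inverse \<kappa>)) * (Const \<kappa> + l * r)"
    by (simp only: mult_ac)
  then have "f = (l * Const \<kappa>) * (Const (inverse \<kappa>) * (Const \<kappa> + l * r))"
    by (simp add: f inv)
  then show "hcomp 1 f dvd f" unfolding f1 by (rule dvdI)
  have "hcomp d f = l * l * hcomp (d - 2) r"
    using \<open>d \<ge> 2\<close> by (auto simp: f hcomp_mult_homogeneous[OF l] hcomp_add hcomp_Const numeral_2_eq_2)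
  also have "\<dots> = l * l * (Const \<kappa> * Const (inverse \<kappa>))\<^sup>2 * hcomp (d - 2) r"
    by (simp add: inv)
  also have "\<dots> = (l * Const \<kappa>)\<^sup>2 * (Const (inverse \<kappa>) ^ 2 * hcomp (d - 2) r)"
    by (simp only: power2_eq_square mult_ac)
  finally show "(hcomp 1 f)\<^sup>2 dvd hcomp d f" unfolding f1 by (rule dvdI)
qed

lemma hcomps_if_linear_divisor:
  fixes f L :: "('v::finite, 'a::field_char_0) mpoly"
  assumes "d \<ge> 2" and f: "f = hcomp 0 f + hcomp 1 f + hcomp d f" and J: "jacobian_unimodular f"
    and fd: "hcomp d f \<noteq> 0" and "L dvd f" and L: "total_deg L = 1"
  shows "hcomp 0 f = 0 \<and> hcomp 1 f dvd f \<and> (hcomp 1 f)\<^sup>2 dvd hcomp d f"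
proof -
  define c l where "c = lookup L 0" and "l = hcomp 1 L"
  have l: "homogeneous 1 l" by (simp add: l_def homogeneous_hcomp)
  have "L = hcomp 0 L + hcomp 1 L"
    using mpoly_eq_sum_hcomp_atMost[of L 1] L by simp
  then have Lcl: "L = Const c + l" by (simp add: c_def l_def hcomp_0_eq_Const)
  have "l \<noteq> 0"
    using L by (auto simp: Lcl total_deg_Const)
  obtain q where "f = L * q" using \<open>L dvd f\<close> ..
  moreover obtain \<kappa> r where "\<kappa> \<noteq> 0" "q = Const \<kappa> + L * r"
    using jacobian_unimodular_cofactor_of_linear[OF L] J \<open>f = L * q\<close> by blast
  ultimately have fL: "f = (Const c + l) * (Const \<kappa> + (Const c + l) * r)" by (simp add: Lcl)
  show ?thesis
  proof (cases "c = 0")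
    case True
    then show ?thesis
      using hcomps_of_linear_multiple[OF l \<open>\<kappa> \<noteq> 0\<close> \<open>d \<ge> 2\<close>] fL by (simp add: Const.hom_zero)
  next
    case False
    have "f = Const (lookup f 0) + hcomp 1 f + hcomp d f"
      using f by (simp add: hcomp_0_eq_Const)
    then have "hcomp d f = 0"
      using hcomp_top_eq_0_if_affine_divisor[OF \<open>d \<ge> 2\<close> _ J l \<open>l \<noteq> 0\<close> False fL] by blast
    with fd show ?thesis by contradiction
  qed
qed

lemma reducible_ne_0: "reducible (f :: ('v::finite, 'a::idom) mpoly) \<Longrightarrow> f \<noteq> 0"
  by (auto simp: reducible_def mpoly_mult_eq_0_iff total_deg_def)

lemma total_deg_eq_if_reducible:
  fixes f :: "('v::finite, 'a::idom) mpoly"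
  assumes "reducible f" and "\<forall>m\<in>keys f. mon_deg m \<in> {0, 1, d}"
  shows "total_deg f = d"
proof -
  obtain g h where "f = g * h" "total_deg g \<ge> 1" "total_deg h \<ge> 1"
    using assms(1) unfolding reducible_def by blast
  moreover from this have "g \<noteq> 0" "h \<noteq> 0" by (auto simp: total_deg_def)
  ultimately have "total_deg f \<ge> 2" by (simp add: total_deg_mult)
  then show ?thesis
    using total_deg_attained[OF reducible_ne_0[OF assms(1)]] assms(2) by force
qed

lemma linear_divisor_if_reducible:
  fixes f :: "('v::finite, 'a::field) mpoly"
  assumes "reducible f" and degs: "\<forall>m\<in>keys f. mon_deg m \<in> {0, 1, d}"
    and f1: "hcomp 1 f \<noteq> 0" and "d \<le> 3 \<or> hcomp 0 f = 0"
  shows "\<exists>g. g dvd f \<and> total_deg g = 1"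
proof -
  have deg: "total_deg f = d"
    using assms(1) degs by (rule total_deg_eq_if_reducible)
  obtain g h where fgh: "f = g * h" and g: "total_deg g \<ge> 1" and h: "total_deg h \<ge> 1"
    using assms(1) unfolding reducible_def by blast
  from \<open>d \<le> 3 \<or> hcomp 0 f = 0\<close> show ?thesis
  proof
    assume "d \<le> 3"
    have "g \<noteq> 0" "h \<noteq> 0" using g h by (auto simp: total_deg_def)
    then have "total_deg g + total_deg h \<le> 3"
      using deg \<open>d \<le> 3\<close> by (simp add: fgh total_deg_mult)
    then have "total_deg g = 1 \<or> total_deg h = 1" using g h by linarith
    then show ?thesis using fgh by (metis dvd_triv_left dvd_triv_right)
  next
    assume "hcomp 0 f = 0"
    moreover have "hcomp k f = 0" if "1 < k" "k < total_deg f" for k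
      using degs that deg by (auto simp: hcomp_eq_0_iff)
    ultimately have "hcomp 1 f dvd f"
      using hcomp_1_dvd_of_factorization[OF fgh g h _ f1] by blast
    then show ?thesis using total_deg_homogeneous[OF homogeneous_hcomp f1] by blast
  qed
qed

theorem corollary4p5:
  fixes f :: "('v::finite, 'a::field_char_0) mpoly" and d :: nat
  assumes "d \<ge> 2"
    and "\<forall>m\<in>Poly_Mapping.keys f. mon_deg m \<in> {0, 1, d}"
    and "reducible f"
    and "jacobian_unimodular f"
  shows "((d \<le> 3 \<or> hcomp 0 f = 0) \<longrightarrow> (\<exists>g. g dvd f \<and> total_deg g = 1))
       \<and> ((\<exists>g. g dvd f \<and> total_deg g = 1) \<longrightarrow>
            hcomp 0 f = 0 \<and> hcomp 1 f dvd f \<and> (hcomp 1 f)^2 dvd hcomp d f)"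
proof -
  have "f = (\<Sum>k\<in>{0, 1, d}. hcomp k f)"
    using assms(2) by (intro mpoly_eq_sum_hcomp) auto
  then have f: "f = hcomp 0 f + hcomp 1 f + hcomp d f"
    using assms(1) by (simp add: add.assoc)
  have f1: "hcomp 1 f \<noteq> 0"
    using assms(4) by (rule hcomp_1_ne_0_if_jacobian_unimodular)
  have fd: "hcomp d f \<noteq> 0"
    using hcomp_total_deg_ne_0[OF reducible_ne_0[OF assms(3)]] total_deg_eq_if_reducible[OF assms(3,2)]
    by simp
  show ?thesis
    using linear_divisor_if_reducible[OF assms(3,2) f1]
      hcomps_if_linear_divisor[OF assms(1) f assms(4) fd]
    by blast
qed

end
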